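(* Let $\lambda\in X^+$ be a $p$-core. Let $S_1$ be the set of pairs $(\alpha,l)$ with $\alpha=\varepsilon_i+\varepsilon_j$, $1\le i<j\le m$, $l\ge1$ an integer, $a:=\langle\lambda+\rho,\alpha^\vee\rangle-lp>0$, $(\lambda+\rho)_j-a<0$ and $\chi(s_{\alpha,l}\cdot\lambda)\ne0$. Let $S_2$ be the set of pairs $(2\varepsilon_i,l)$ with $1\le i\le m$, $l\ge1$ an integer, $\langle\lambda+\rho,(2\varepsilon_i)^\vee\rangle-lp>0$ and $\chi(s_{2\varepsilon_i,l}\cdot\lambda)\ne0$. Then there is a map $\varphi$ from $S_1$ to the set $\{2\varepsilon_1,\dots,2\varepsilon_m\}$ such that (i) $(\alpha,l)\mapsto(\varphi(\alpha,l),l)$ is a bijection from $S_1$ onto $S_2$, and (ii) $\chi(s_{\alpha,l}\cdot\lambda)=-\chi(s_{\varphi(\alpha,l),l}\cdot\lambda)$ for all $(\alpha,l)\in S_1$. Moreover, if $\alpha=\varepsilon_i+\varepsilon_j$ with $1\le i<j\le m$ and $l\ge1$ is an integer such that $j>l(\lambda)$, $\langle\lambda+\rho,\alpha^\vee\rangle-lp>0$ and $\chi(s_{\alpha,l}\cdot\lambda)\ne0$, then $(\alpha,l)\in S_1$.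
   Context: Setup: $p>2$ is a prime, $m\ge1$, weight lattice $X=\mathbb Z^m$ of $\mathrm{Sp}_{2m}$ with standard basis $\varepsilon_i$, standard inner product, $\alpha^\vee=2\alpha/\langle\alpha,\alpha\rangle$ (so $(\varepsilon_i+\varepsilon_j)^\vee=\varepsilon_i+\varepsilon_j$, $(2\varepsilon_i)^\vee=\varepsilon_i$). $X^+=\{\lambda\in\mathbb Z^m:\lambda_1\ge\dots\ge\lambda_m\ge0\}$; $l(\lambda)$ is the number of nonzero entries. $\rho=(m,m-1,\dots,1)$. $s_{\alpha,l}(x)=x-(\langle x,\alpha^\vee\rangle-lp)\alpha$, $w\cdot x=w(x+\rho)-\rho$. For $\mu\in X$, $\chi(\mu)$ is the Weyl character of type $C_m$; $\chi(\mu)=0$ iff some entry of $\mu+\rho$ is $0$ or two entries of $\mu+\rho$ are equal up to sign, and otherwise $\chi(\mu)=\det(w)\chi(w\cdot\mu)$ for the unique signed permutation $w$ with $w\cdot\mu$ dominant. A $p$-core is $\lambda\in X^+$ such that for all $i$ and all integers $l\ge1$ with $(\lambda+\rho)_i-lp>0$, the number $(\lambda+\rho)_i-lp$ occurs as an entry of $\lambda+\rho$. *)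

theory Defs
  imports Main "HOL-Combinatorics.Permutations" "HOL-Library.Function_Algebras" "HOL-Computational_Algebra.Primes"
begin

text \<open>Weights of Sp(2m) are integer vectors of length m, represented as lists;
  list position k (0-based) corresponds to the basis vector eps_(k+1).\<close>

type_synonym wt = "int list"

definition vadd :: "wt \<Rightarrow> wt \<Rightarrow> wt" where
  "vadd x y = map2 (+) x y"

definition vsub :: "wt \<Rightarrow> wt \<Rightarrow> wt" where
  "vsub x y = map2 (-) x y"

definition vscale :: "int \<Rightarrow> wt \<Rightarrow> wt" where
  "vscale c x = map (\<lambda>a. c * a) x"

definition inner :: "wt \<Rightarrow> wt \<Rightarrow> int" where
  "inner x y = sum_list (map2 (*) x y)"

definition eps :: "nat \<Rightarrow> nat \<Rightarrow> wt" where
  "eps m i = map (\<lambda>k. if k = i then 1 else 0) [0..<m]"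

definition rho :: "nat \<Rightarrow> wt" where
  "rho m = map (\<lambda>k. int (m - k)) [0..<m]"

text \<open>Pairing with the coroot: <x, alpha^vee> = 2<x,alpha>/<alpha,alpha>
  (exact for the roots of C_m).\<close>
definition pair_coroot :: "wt \<Rightarrow> wt \<Rightarrow> int" where
  "pair_coroot x \<alpha> = (2 * inner x \<alpha>) div inner \<alpha> \<alpha>"

definition s_aff :: "nat \<Rightarrow> wt \<Rightarrow> int \<Rightarrow> wt \<Rightarrow> wt" where
  "s_aff p \<alpha> l x = vsub x (vscale (pair_coroot x \<alpha> - l * int p) \<alpha>)"

definition s_dot :: "nat \<Rightarrow> nat \<Rightarrow> wt \<Rightarrow> int \<Rightarrow> wt \<Rightarrow> wt" where
  "s_dot m p \<alpha> l x = vsub (s_aff p \<alpha> l (vadd x (rho m))) (rho m)"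

definition dominant :: "nat \<Rightarrow> wt \<Rightarrow> bool" where
  "dominant m x \<longleftrightarrow> length x = m \<and> sorted_wrt (\<ge>) x \<and> (\<forall>a\<in>set x. a \<ge> 0)"

definition nz_len :: "wt \<Rightarrow> nat" where
  "nz_len x = length (filter (\<lambda>a. a \<noteq> 0) x)"

text \<open>The Weyl group of type C_m: signed permutations (sigma, s), acting by
  (w x)_k = s k * x_(sigma k); its determinant is sign(sigma) * prod s_k.\<close>
definition weyl :: "nat \<Rightarrow> ((nat \<Rightarrow> nat) \<times> (nat \<Rightarrow> int)) set" where
  "weyl m = {(\<sigma>, s). \<sigma> permutes {..<m} \<and> (\<forall>k<m. s k = 1 \<or> s k = -1) \<and> (\<forall>k\<ge>m. s k = 1)}"

definition wact :: "nat \<Rightarrow> (nat \<Rightarrow> nat) \<times> (nat \<Rightarrow> int) \<Rightarrow> wt \<Rightarrow> wt" where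
  "wact m w x = map (\<lambda>k. snd w k * x ! (fst w k)) [0..<m]"

definition wdet :: "nat \<Rightarrow> (nat \<Rightarrow> nat) \<times> (nat \<Rightarrow> int) \<Rightarrow> int" where
  "wdet m w = sign (fst w) * (\<Prod>k<m. snd w k)"

definition wdot :: "nat \<Rightarrow> (nat \<Rightarrow> nat) \<times> (nat \<Rightarrow> int) \<Rightarrow> wt \<Rightarrow> wt" where
  "wdot m w x = vsub (wact m w (vadd x (rho m))) (rho m)"

definition chi_zero :: "nat \<Rightarrow> wt \<Rightarrow> bool" where
  "chi_zero m \<mu> \<longleftrightarrow> (let v = vadd \<mu> (rho m) in
     (\<exists>i<m. v ! i = 0) \<or> (\<exists>i<m. \<exists>j<m. i \<noteq> j \<and> (v ! i = v ! j \<or> v ! i = - v ! j)))"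

text \<open>The Weyl character chi(mu), recorded by its coordinates in the basis
  {chi(nu) : nu dominant} of the character ring (Weyl characters of dominant
  weights are linearly independent): chi(mu) = det(w) chi(w.mu) for the unique
  w with w.mu dominant, and chi(mu) = 0 in the singular case.\<close>
definition chi :: "nat \<Rightarrow> wt \<Rightarrow> (wt \<Rightarrow> int)" where
  "chi m \<mu> = (\<lambda>\<nu>.
     if chi_zero m \<mu> then 0
     else if dominant m \<nu> \<and> (\<exists>w\<in>weyl m. wdot m w \<mu> = \<nu>)
       then wdet m (THE w. w \<in> weyl m \<and> wdot m w \<mu> = \<nu>)
     else 0)"

definition p_core :: "nat \<Rightarrow> nat \<Rightarrow> wt \<Rightarrow> bool" where
  "p_core m p lam \<longleftrightarrow> dominant m lam \<and>
     (let v = vadd lam (rho m) in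
      \<forall>i<m. \<forall>l::int. l \<ge> 1 \<longrightarrow> v ! i - l * int p > 0 \<longrightarrow> v ! i - l * int p \<in> set v)"

end

theory Submission imports Defs begin

text \<open>Write v = \<lambda> + \<rho>; it is strictly decreasing with positive entries. The reflection
  s_(\<epsilon>i+\<epsilon>j,l) replaces v_i, v_j by lp - v_j, lp - v_i. When v_i - lp > 0 the p-core
  property puts v_i - lp = v_k into v, and unless k = j the reflected vector has two entries equal
  up to sign, so \<chi> vanishes. Hence v_j = v_i - lp, and then s_(\<epsilon>i+\<epsilon>j,l)(v) and
  s_(2\<epsilon>i,l)(v) differ only in the sign of the j-th entry, which negates \<chi>. Conversely the
  p-core property produces the partner j of every (2\<epsilon>i, l), giving the bijection. If j is beyond
  l(\<lambda>), the tail of v is m - j, ..., 1, and lp - v_i would reappear in it, so v_i - lp > 0.\<close>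

lemma length_vadd [simp]: "length (vadd x y) = min (length x) (length y)"
  by (simp add: vadd_def)

lemma nth_vadd [simp]: "k < length x \<Longrightarrow> k < length y \<Longrightarrow> vadd x y ! k = x ! k + y ! k"
  by (simp add: vadd_def)

lemma length_vsub [simp]: "length (vsub x y) = min (length x) (length y)"
  by (simp add: vsub_def)

lemma nth_vsub [simp]: "k < length x \<Longrightarrow> k < length y \<Longrightarrow> vsub x y ! k = x ! k - y ! k"
  by (simp add: vsub_def)

lemma length_vscale [simp]: "length (vscale c x) = length x"
  by (simp add: vscale_def)

lemma nth_vscale [simp]: "k < length x \<Longrightarrow> vscale c x ! k = c * x ! k"
  by (simp add: vscale_def)

lemma length_eps [simp]: "length (eps m i) = m"
  by (simp add: eps_def)

lemma nth_eps [simp]: "k < m \<Longrightarrow> eps m i ! k = (if k = i then 1 else 0)"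
  by (simp add: eps_def)

lemma length_rho [simp]: "length (rho m) = m"
  by (simp add: rho_def)

lemma nth_rho [simp]: "k < m \<Longrightarrow> rho m ! k = int (m - k)"
  by (simp add: rho_def)

lemma vsub_right_cancel:
  assumes eq: "vsub a c = vsub b c" and "length a = length c" "length b = length c"
  shows "a = b"
proof (rule nth_equalityI)
  fix k assume "k < length a"
  with assms have "a ! k - c ! k = b ! k - c ! k" by (metis nth_vsub)
  then show "a ! k = b ! k" by simp
qed (use assms in simp)

lemma inner_conv_sum:
  "length x = m \<Longrightarrow> length y = m \<Longrightarrow> inner x y = (\<Sum>k<m. x ! k * y ! k)"
  unfolding inner_def by (simp add: sum_list_sum_nth atLeast0LessThan)

lemma inner_eps: "length x = m \<Longrightarrow> i < m \<Longrightarrow> inner x (eps m i) = x ! i"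
  by (simp add: inner_conv_sum if_distrib cong: if_cong)

lemma inner_vadd:
  "length x = m \<Longrightarrow> length a = m \<Longrightarrow> length b = m \<Longrightarrow> inner x (vadd a b) = inner x a + inner x b"
  by (simp add: inner_conv_sum distrib_left sum.distrib)

lemma inner_vscale: "length x = m \<Longrightarrow> length a = m \<Longrightarrow> inner x (vscale c a) = c * inner x a"
  by (simp add: inner_conv_sum sum_distrib_left mult_ac)

lemma pair_coroot_short_root:
  "length x = m \<Longrightarrow> i \<noteq> j \<Longrightarrow> i < m \<Longrightarrow> j < m \<Longrightarrow>
   pair_coroot x (vadd (eps m i) (eps m j)) = x ! i + x ! j"
  by (simp add: pair_coroot_def inner_vadd inner_eps)

lemma pair_coroot_long_root:
  "length x = m \<Longrightarrow> i < m \<Longrightarrow> pair_coroot x (vscale 2 (eps m i)) = x ! i"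
  by (simp add: pair_coroot_def inner_vscale inner_eps)

lemma length_s_aff [simp]: "length (s_aff p \<alpha> l x) = min (length x) (length \<alpha>)"
  by (simp add: s_aff_def)

lemma nth_s_aff:
  "k < length x \<Longrightarrow> k < length \<alpha> \<Longrightarrow>
   s_aff p \<alpha> l x ! k = x ! k - (pair_coroot x \<alpha> - l * int p) * \<alpha> ! k"
  by (simp add: s_aff_def)

lemma vadd_s_dot_rho:
  "length lam = m \<Longrightarrow> length \<alpha> = m \<Longrightarrow>
   vadd (s_dot m p \<alpha> l lam) (rho m) = s_aff p \<alpha> l (vadd lam (rho m))"
  unfolding s_dot_def by (rule nth_equalityI) (auto simp: nth_s_aff)

lemma length_s_dot: "length lam = m \<Longrightarrow> length \<alpha> = m \<Longrightarrow> length (s_dot m p \<alpha> l lam) = m"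
  by (simp add: s_dot_def)

lemma nth_s_aff_short_root:
  assumes "length v = m" "i \<noteq> j" "i < m" "j < m" "k < m"
  shows "s_aff p (vadd (eps m i) (eps m j)) l v ! k =
    (if k = i then l * int p - v ! j else if k = j then l * int p - v ! i else v ! k)"
  using assms by (simp add: nth_s_aff pair_coroot_short_root)

lemma nth_s_aff_long_root:
  assumes "length v = m" "i < m" "k < m"
  shows "s_aff p (vscale 2 (eps m i)) l v ! k = (if k = i then 2 * l * int p - v ! i else v ! k)"
  using assms by (simp add: nth_s_aff pair_coroot_long_root)

lemma s_aff_short_root_eq_negate_long_root:
  assumes "length v = m" "i \<noteq> j" "i < m" "j < m" "v ! i - l * int p = v ! j"
  shows "s_aff p (vadd (eps m i) (eps m j)) l v =
    (s_aff p (vscale 2 (eps m i)) l v)[j := - (s_aff p (vscale 2 (eps m i)) l v ! j)]"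
  using assms by (intro nth_equalityI) (auto simp: nth_s_aff_short_root nth_s_aff_long_root nth_list_update)

definition singular :: "nat \<Rightarrow> int list \<Rightarrow> bool" where
  "singular m v \<longleftrightarrow> (\<exists>i<m. v ! i = 0) \<or> (\<exists>i<m. \<exists>j<m. i \<noteq> j \<and> \<bar>v ! i\<bar> = \<bar>v ! j\<bar>)"

lemma chi_zero_iff_singular: "chi_zero m \<mu> \<longleftrightarrow> singular m (vadd \<mu> (rho m))"
  by (auto simp: chi_zero_def singular_def Let_def abs_eq_iff)

lemma chi_nonzero_imp_regular: "chi m \<mu> \<noteq> 0 \<Longrightarrow> \<not> singular m (vadd \<mu> (rho m))"
  by (auto simp: chi_def chi_zero_iff_singular fun_eq_iff)

lemma abs_nth_negate_nth [simp]: "\<bar>(v :: int list)[j := - (v ! j)] ! k\<bar> = \<bar>v ! k\<bar>"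
  by (cases "j < length v") (simp_all add: nth_list_update list_update_beyond)

lemma singular_negate_nth [simp]: "singular m (v[j := - (v ! j)]) \<longleftrightarrow> singular m v"
proof -
  have "v[j := - (v ! j)] ! k = 0 \<longleftrightarrow> v ! k = 0" for k
    using abs_nth_negate_nth[of v j k] by (metis abs_eq_0)
  then show ?thesis by (simp add: singular_def)
qed

definition weyl_flip :: "nat \<Rightarrow> (nat \<Rightarrow> nat) \<times> (nat \<Rightarrow> int) \<Rightarrow> (nat \<Rightarrow> nat) \<times> (nat \<Rightarrow> int)" where
  "weyl_flip j w = (fst w, \<lambda>k. snd w k * (if fst w k = j then -1 else 1))"

lemma weyl_flip_in_weyl: "w \<in> weyl m \<Longrightarrow> j < m \<Longrightarrow> weyl_flip j w \<in> weyl m"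
  by (auto simp: weyl_def weyl_flip_def permutes_not_in)

lemma wact_weyl_flip: "j < length u \<Longrightarrow> wact m (weyl_flip j w) (u[j := - (u ! j)]) = wact m w u"
  by (auto simp: wact_def weyl_flip_def nth_list_update)

lemma wdet_weyl_flip:
  assumes "w \<in> weyl m" "j < m"
  shows "wdet m (weyl_flip j w) = - wdet m w"
proof -
  obtain \<sigma> s where w: "w = (\<sigma>, s)" by fastforce
  with assms have perm: "\<sigma> permutes {..<m}" by (simp add: weyl_def)
  have "(\<Prod>k<m. if \<sigma> k = j then -1 else 1 :: int) = (\<Prod>k<m. if k = j then -1 else 1)"
    using prod.permute[OF perm, of "\<lambda>k. if k = j then -1 else 1 :: int"] by (simp add: comp_def)
  also have "\<dots> = -1"
    using \<open>j < m\<close> by (simp add: prod.delta)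
  finally show ?thesis
    by (simp add: wdet_def weyl_flip_def w prod.distrib)
qed

lemma wact_inj:
  assumes "w \<in> weyl m" "w' \<in> weyl m" "length u = m" "\<not> singular m u"
    and eq: "wact m w u = wact m w' u"
  shows "w = w'"
proof -
  obtain \<sigma> s \<sigma>' s' where w: "w = (\<sigma>, s)" and w': "w' = (\<sigma>', s')" by fastforce
  from assms w w' have perm: "\<sigma> permutes {..<m}" "\<sigma>' permutes {..<m}"
    and signs: "\<forall>k<m. s k = 1 \<or> s k = -1" "\<forall>k<m. s' k = 1 \<or> s' k = -1"
    and outside: "\<forall>k\<ge>m. s k = 1" "\<forall>k\<ge>m. s' k = 1"
    by (auto simp: weyl_def)
  have "\<sigma> k = \<sigma>' k \<and> s k = s' k" for k
  proof (cases "k < m")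
    case True
    then have in_range: "\<sigma> k < m" "\<sigma>' k < m"
      using perm by (auto dest: permutes_in_image)
    have "wact m w u ! k = wact m w' u ! k"
      using eq by simp
    with True have entry: "s k * u ! \<sigma> k = s' k * u ! \<sigma>' k"
      by (simp add: wact_def w w')
    moreover have "\<bar>s k\<bar> = 1" "\<bar>s' k\<bar> = 1"
      using signs True by auto
    ultimately have "\<bar>u ! \<sigma> k\<bar> = \<bar>u ! \<sigma>' k\<bar>"
      by (metis abs_mult mult_1)
    then have "\<sigma> k = \<sigma>' k"
      using \<open>\<not> singular m u\<close> in_range by (auto simp: singular_def)
    moreover have "u ! \<sigma> k \<noteq> 0"
      using \<open>\<not> singular m u\<close> in_range by (auto simp: singular_def)
    ultimately show ?thesis
      using entry by simp
  qed (use perm outside in \<open>simp add: permutes_not_in\<close>)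
  then show ?thesis
    by (simp add: w w' fun_eq_iff)
qed

lemma wdot_inj:
  assumes "w \<in> weyl m" "w' \<in> weyl m" "length \<mu> = m" "\<not> singular m (vadd \<mu> (rho m))"
    and "wdot m w \<mu> = wdot m w' \<mu>"
  shows "w = w'"
proof (rule wact_inj)
  show "wact m w (vadd \<mu> (rho m)) = wact m w' (vadd \<mu> (rho m))"
    using assms(5) unfolding wdot_def by (rule vsub_right_cancel) (simp_all add: wact_def)
qed (use assms in simp_all)

lemma chi_wdot:
  assumes "w \<in> weyl m" "length \<mu> = m" "\<not> singular m (vadd \<mu> (rho m))" "dominant m (wdot m w \<mu>)"
  shows "chi m \<mu> (wdot m w \<mu>) = wdet m w"
proof -
  have "(THE w'. w' \<in> weyl m \<and> wdot m w' \<mu> = wdot m w \<mu>) = w"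
    using assms wdot_inj by blast
  then show ?thesis
    using assms by (auto simp: chi_def chi_zero_iff_singular)
qed

lemma chi_negate_coordinate_reachable:
  assumes len: "length \<mu> = m" "length \<mu>' = m" and "j < m"
    and flip: "vadd \<mu>' (rho m) = (vadd \<mu> (rho m))[j := - (vadd \<mu> (rho m) ! j)]"
    and w: "w \<in> weyl m"
  shows "chi m \<mu>' (wdot m w \<mu>) = - chi m \<mu> (wdot m w \<mu>)"
proof (cases "singular m (vadd \<mu> (rho m)) \<or> \<not> dominant m (wdot m w \<mu>)")
  case True
  then show ?thesis
    using flip by (auto simp: chi_def chi_zero_iff_singular)
next
  case False
  have "wdot m (weyl_flip j w) \<mu>' = wdot m w \<mu>"
    unfolding wdot_def flip using len \<open>j < m\<close> by (subst wact_weyl_flip) simp_all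
  then show ?thesis
    using False chi_wdot[OF weyl_flip_in_weyl[OF w \<open>j < m\<close>] len(2)]
      chi_wdot[OF w len(1)] wdet_weyl_flip[OF w \<open>j < m\<close>] flip
    by auto
qed

lemma chi_negate_coordinate:
  assumes len: "length \<mu> = m" "length \<mu>' = m" and "j < m"
    and flip: "vadd \<mu>' (rho m) = (vadd \<mu> (rho m))[j := - (vadd \<mu> (rho m) ! j)]"
  shows "chi m \<mu>' = - chi m \<mu>"
proof
  fix \<nu>
  have flip': "vadd \<mu> (rho m) = (vadd \<mu>' (rho m))[j := - (vadd \<mu>' (rho m) ! j)]"
  proof -
    have "j < length (vadd \<mu> (rho m))"
      using len \<open>j < m\<close> by simp
    then show ?thesis
      by (simp only: flip nth_list_update_eq list_update_overwrite minus_minus list_update_id)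
  qed
  consider (reach) w where "w \<in> weyl m" "\<nu> = wdot m w \<mu>"
    | (reach') w where "w \<in> weyl m" "\<nu> = wdot m w \<mu>'"
    | (unreachable) "\<nu> \<notin> (\<lambda>w. wdot m w \<mu>) ` weyl m" "\<nu> \<notin> (\<lambda>w. wdot m w \<mu>') ` weyl m"
    by blast
  then show "chi m \<mu>' \<nu> = (- chi m \<mu>) \<nu>"
  proof cases
    case reach
    then show ?thesis
      using chi_negate_coordinate_reachable[OF len \<open>j < m\<close> flip] by simp
  next
    case reach'
    then show ?thesis
      using chi_negate_coordinate_reachable[OF len(2,1) \<open>j < m\<close> flip'] by simp
  next
    case unreachable
    then show ?thesis
      by (auto simp: chi_def)
  qed
qed

lemma chi_s_dot_short_root_eq_neg_long_root:
  assumes "length lam = m" "i \<noteq> j" "i < m" "j < m"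
    and "vadd lam (rho m) ! i - l * int p = vadd lam (rho m) ! j"
  shows "chi m (s_dot m p (vadd (eps m i) (eps m j)) l lam) =
    - chi m (s_dot m p (vscale 2 (eps m i)) l lam)"
proof (rule chi_negate_coordinate)
  show "vadd (s_dot m p (vadd (eps m i) (eps m j)) l lam) (rho m) =
    (vadd (s_dot m p (vscale 2 (eps m i)) l lam) (rho m))
      [j := - (vadd (s_dot m p (vscale 2 (eps m i)) l lam) (rho m) ! j)]"
    using assms by (simp only: vadd_s_dot_rho length_eps length_vadd length_vscale length_rho min.idem)
      (rule s_aff_short_root_eq_negate_long_root, simp_all)
qed (use assms in \<open>simp_all add: length_s_dot\<close>)

lemma singular_s_aff_short_root:
  assumes "length v = m" "i \<noteq> j" "i < m" "j < m" "k < m" "k \<noteq> i" "k \<noteq> j"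
    and "v ! k = v ! i - l * int p"
  shows "singular m (s_aff p (vadd (eps m i) (eps m j)) l v)"
proof -
  let ?u = "s_aff p (vadd (eps m i) (eps m j)) l v"
  have "\<bar>?u ! k\<bar> = \<bar>?u ! j\<bar>"
    using assms by (simp add: nth_s_aff_short_root)
  then show ?thesis
    using assms unfolding singular_def by blast
qed

lemma singular_s_aff_short_root_tail:
  assumes "length v = m" "i < j" "j < m"
    and tail: "\<And>k. j \<le> k \<Longrightarrow> k < m \<Longrightarrow> v ! k = int (m - k)"
    and "0 < v ! i + v ! j - l * int p" "v ! i - l * int p \<le> 0"
  shows "singular m (s_aff p (vadd (eps m i) (eps m j)) l v)"
proof -
  let ?u = "s_aff p (vadd (eps m i) (eps m j)) l v"
  define t where "t = l * int p - v ! i"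
  have u_j: "?u ! j = t"
    using assms by (simp add: nth_s_aff_short_root t_def)
  show ?thesis
  proof (cases "t = 0")
    case True
    with u_j \<open>j < m\<close> show ?thesis
      unfolding singular_def by blast
  next
    case False
    \<comment> \<open>0 < t < v_j = m - j, so t is itself an entry m - k of the tail beyond j\<close>
    define k where "k = m - nat t"
    have "j < k" "k < m"
      using False assms tail[of j] by (auto simp: k_def t_def)
    then have "?u ! k = t"
      using assms tail[of k] False by (simp add: nth_s_aff_short_root k_def t_def)
    with u_j \<open>j < k\<close> \<open>k < m\<close> show ?thesis
      unfolding singular_def by (metis less_imp_neq less_trans)
  qed
qed

lemma dominant_shift_strict_decreasing:
  assumes "dominant m lam" "i < j" "j < m"
  shows "vadd lam (rho m) ! j < vadd lam (rho m) ! i"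
proof -
  have "lam ! j \<le> lam ! i"
    using assms by (simp add: dominant_def sorted_wrt_iff_nth_less)
  with assms show ?thesis
    by (simp add: dominant_def)
qed

lemma dominant_nth_nonneg:
  assumes "dominant m lam" "k < m"
  shows "0 \<le> lam ! k"
proof -
  from assms have "lam ! k \<in> set lam" "\<forall>a\<in>set lam. 0 \<le> a"
    by (simp_all add: dominant_def)
  then show ?thesis
    by blast
qed

lemma dominant_shift_pos:
  assumes "dominant m lam" "k < m"
  shows "0 < vadd lam (rho m) ! k"
proof -
  have "length lam = m"
    using assms(1) by (simp add: dominant_def)
  with assms dominant_nth_nonneg[OF assms] show ?thesis
    by simp
qed

lemma dominant_nth_eq_0:
  assumes "dominant m lam" "nz_len lam \<le> k" "k < m"
  shows "lam ! k = 0"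
proof (rule ccontr)
  assume "lam ! k \<noteq> 0"
  with assms have "0 < lam ! k"
    using dominant_nth_nonneg[of m lam k] by simp
  have sub: "{..k} \<subseteq> {i. i < length lam \<and> lam ! i \<noteq> 0}"
  proof
    fix i assume "i \<in> {..k}"
    with assms have "lam ! k \<le> lam ! i"
      by (cases "i = k") (auto simp: dominant_def sorted_wrt_iff_nth_less)
    with \<open>0 < lam ! k\<close> \<open>i \<in> {..k}\<close> assms show "i \<in> {i. i < length lam \<and> lam ! i \<noteq> 0}"
      by (auto simp: dominant_def)
  qed
  have "card {..k} \<le> card {i. i < length lam \<and> lam ! i \<noteq> 0}"
    by (rule card_mono[OF _ sub]) simp
  then have "k + 1 \<le> nz_len lam"
    by (simp add: nz_len_def length_filter_conv_card)
  with assms show False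
    by simp
qed

lemma p_core_descent:
  assumes core: "p_core m p lam" and "0 < p" "i < m" "1 \<le> l"
    and "0 < vadd lam (rho m) ! i - l * int p"
  shows "\<exists>k. i < k \<and> k < m \<and> vadd lam (rho m) ! k = vadd lam (rho m) ! i - l * int p"
proof -
  have dom: "dominant m lam"
    using core by (simp add: p_core_def)
  then have len: "length (vadd lam (rho m)) = m"
    by (simp add: dominant_def)
  with assms obtain k where k: "k < m" "vadd lam (rho m) ! k = vadd lam (rho m) ! i - l * int p"
    unfolding p_core_def Let_def by (metis in_set_conv_nth)
  have "i < k"
  proof (rule ccontr)
    assume "\<not> i < k"
    then have "vadd lam (rho m) ! i \<le> vadd lam (rho m) ! k"
      using dominant_shift_strict_decreasing[OF dom, of k i] \<open>i < m\<close> by (cases "k = i") auto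
    moreover have "0 < l * int p"
      using \<open>0 < p\<close> \<open>1 \<le> l\<close> by simp
    ultimately show False
      using k by simp
  qed
  with k show ?thesis
    by blast
qed

lemma short_root_partner:
  assumes core: "p_core m p lam" and "0 < p" "i < j" "j < m" "1 \<le> l"
    and pos: "0 < vadd lam (rho m) ! i - l * int p"
    and nonzero: "chi m (s_dot m p (vadd (eps m i) (eps m j)) l lam) \<noteq> 0"
  shows "vadd lam (rho m) ! i - l * int p = vadd lam (rho m) ! j"
proof -
  have len: "length lam = m"
    using core by (simp add: p_core_def dominant_def)
  obtain k where k: "i < k" "k < m" "vadd lam (rho m) ! k = vadd lam (rho m) ! i - l * int p"
    using p_core_descent[OF core \<open>0 < p\<close> _ \<open>1 \<le> l\<close> pos] assms by auto
  have "\<not> singular m (s_aff p (vadd (eps m i) (eps m j)) l (vadd lam (rho m)))"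
    using chi_nonzero_imp_regular[OF nonzero] len by (simp add: vadd_s_dot_rho)
  then have "k = j"
    using singular_s_aff_short_root[of "vadd lam (rho m)" m i j k] k len assms by fastforce
  with k show ?thesis
    by simp
qed

lemma short_root_tail_pos:
  assumes dom: "dominant m lam" and "i < j" "j < m" "nz_len lam \<le> j"
    and coroot_pos: "0 < pair_coroot (vadd lam (rho m)) (vadd (eps m i) (eps m j)) - l * int p"
    and nonzero: "chi m (s_dot m p (vadd (eps m i) (eps m j)) l lam) \<noteq> 0"
  shows "0 < vadd lam (rho m) ! i - l * int p"
proof (rule ccontr)
  assume "\<not> 0 < vadd lam (rho m) ! i - l * int p"
  moreover have len: "length lam = m"
    using dom by (simp add: dominant_def)
  moreover have "vadd lam (rho m) ! k = int (m - k)" if "j \<le> k" "k < m" for k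
    using dominant_nth_eq_0[OF dom, of k] that assms len by simp
  ultimately have "singular m (s_aff p (vadd (eps m i) (eps m j)) l (vadd lam (rho m)))"
    using coroot_pos assms
    by (intro singular_s_aff_short_root_tail) (simp_all add: pair_coroot_short_root)
  with chi_nonzero_imp_regular[OF nonzero] len show False
    by (simp add: vadd_s_dot_rho)
qed

lemma dominant_shift_inj:
  "dominant m lam \<Longrightarrow> j < m \<Longrightarrow> j' < m \<Longrightarrow> vadd lam (rho m) ! j = vadd lam (rho m) ! j' \<Longrightarrow> j = j'"
  by (metis dominant_shift_strict_decreasing less_irrefl linorder_neqE_nat)

definition long_root_of :: "nat \<Rightarrow> wt \<Rightarrow> wt" where
  "long_root_of m \<alpha> = vscale 2 (eps m (LEAST k. \<alpha> ! k \<noteq> 0))"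

lemma long_root_of_short_root:
  assumes "i < j" "j < m"
  shows "long_root_of m (vadd (eps m i) (eps m j)) = vscale 2 (eps m i)"
proof -
  have "(LEAST k. vadd (eps m i) (eps m j) ! k \<noteq> 0) = i"
  proof (rule Least_equality)
    fix k assume "vadd (eps m i) (eps m j) ! k \<noteq> 0"
    with assms show "i \<le> k"
      by (cases "k < i") simp_all
  qed (use assms in simp)
  then show ?thesis
    by (simp add: long_root_of_def)
qed

lemma vscale_two_eps_inj:
  assumes "vscale 2 (eps m i) = vscale 2 (eps m i')" "i < m" "i' < m"
  shows "i = i'"
proof -
  have "vscale 2 (eps m i) ! i = vscale 2 (eps m i') ! i"
    using assms(1) by simp
  with assms(2,3) show ?thesis
    by (simp split: if_splits)
qed

text \<open>S1 and S2 of the theorem. In S1 the condition (\<lambda>+\<rho>)_j - a < 0 is replaced by the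
  equivalent (\<lambda>+\<rho>)_i - lp > 0, which also implies a > 0.\<close>

definition short_pairs :: "nat \<Rightarrow> nat \<Rightarrow> wt \<Rightarrow> (wt \<times> int) set" where
  "short_pairs m p lam = {(vadd (eps m i) (eps m j), l) | i j l. i < j \<and> j < m \<and> 1 \<le> l \<and>
     0 < vadd lam (rho m) ! i - l * int p \<and> chi m (s_dot m p (vadd (eps m i) (eps m j)) l lam) \<noteq> 0}"

definition long_pairs :: "nat \<Rightarrow> nat \<Rightarrow> wt \<Rightarrow> (wt \<times> int) set" where
  "long_pairs m p lam = {(vscale 2 (eps m i), l) | i l. i < m \<and> 1 \<le> l \<and>
     0 < vadd lam (rho m) ! i - l * int p \<and> chi m (s_dot m p (vscale 2 (eps m i)) l lam) \<noteq> 0}"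

lemma chi_s_dot_short_pair:
  assumes core: "p_core m p lam" and "0 < p" and mem: "(\<alpha>, l) \<in> short_pairs m p lam"
  shows "chi m (s_dot m p \<alpha> l lam) = - chi m (s_dot m p (long_root_of m \<alpha>) l lam)"
proof -
  obtain i j where ij: "i < j" "j < m" "\<alpha> = vadd (eps m i) (eps m j)" and "1 \<le> l"
    "0 < vadd lam (rho m) ! i - l * int p" "chi m (s_dot m p \<alpha> l lam) \<noteq> 0"
    using mem by (auto simp: short_pairs_def)
  then have "vadd lam (rho m) ! i - l * int p = vadd lam (rho m) ! j"
    using short_root_partner[OF core \<open>0 < p\<close>] by blast
  moreover have "length lam = m"
    using core by (simp add: p_core_def dominant_def)
  ultimately show ?thesis
    using ij chi_s_dot_short_root_eq_neg_long_root long_root_of_short_root by simp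
qed

lemma bij_betw_short_pairs_long_pairs:
  assumes core: "p_core m p lam" and "0 < p"
  shows "bij_betw (\<lambda>(\<alpha>, l). (long_root_of m \<alpha>, l)) (short_pairs m p lam) (long_pairs m p lam)"
proof (rule bij_betw_imageI)
  let ?v = "vadd lam (rho m)"
  have dom: "dominant m lam" and len: "length lam = m"
    using core by (simp_all add: p_core_def dominant_def)
  show "inj_on (\<lambda>(\<alpha>, l). (long_root_of m \<alpha>, l)) (short_pairs m p lam)"
  proof (rule inj_onI)
    fix x y assume "x \<in> short_pairs m p lam" "y \<in> short_pairs m p lam"
      and eq: "(case x of (\<alpha>, l) \<Rightarrow> (long_root_of m \<alpha>, l)) = (case y of (\<alpha>, l) \<Rightarrow> (long_root_of m \<alpha>, l))"
    then obtain i j l i' j' l' where x: "x = (vadd (eps m i) (eps m j), l)" "i < j" "j < m"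
      and y: "y = (vadd (eps m i') (eps m j'), l')" "i' < j'" "j' < m"
      and "1 \<le> l" "0 < ?v ! i - l * int p" "chi m (s_dot m p (vadd (eps m i) (eps m j)) l lam) \<noteq> 0"
      and "1 \<le> l'" "0 < ?v ! i' - l' * int p" "chi m (s_dot m p (vadd (eps m i') (eps m j')) l' lam) \<noteq> 0"
      unfolding short_pairs_def by blast
    moreover from eq x y have "i = i'" "l = l'"
      using vscale_two_eps_inj[of m i i'] by (simp_all add: long_root_of_short_root)
    ultimately have "?v ! j = ?v ! j'"
      using short_root_partner[OF core \<open>0 < p\<close>] by metis
    then have "j = j'"
      using dominant_shift_inj[OF dom] \<open>j < m\<close> \<open>j' < m\<close> by blast
    with x y \<open>i = i'\<close> \<open>l = l'\<close> show "x = y"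
      by simp
  qed
  show "(\<lambda>(\<alpha>, l). (long_root_of m \<alpha>, l)) ` short_pairs m p lam = long_pairs m p lam"
  proof (intro equalityI subsetI)
    fix x assume "x \<in> (\<lambda>(\<alpha>, l). (long_root_of m \<alpha>, l)) ` short_pairs m p lam"
    then obtain \<alpha> l where x: "x = (long_root_of m \<alpha>, l)" and mem: "(\<alpha>, l) \<in> short_pairs m p lam"
      by auto
    then obtain i j where "i < j" "j < m" "\<alpha> = vadd (eps m i) (eps m j)" "1 \<le> l"
      "0 < ?v ! i - l * int p" "chi m (s_dot m p \<alpha> l lam) \<noteq> 0"
      by (auto simp: short_pairs_def)
    with chi_s_dot_short_pair[OF core \<open>0 < p\<close> mem] show "x \<in> long_pairs m p lam"
      by (auto simp: x long_pairs_def long_root_of_short_root)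
  next
    fix x assume "x \<in> long_pairs m p lam"
    then obtain i l where x: "x = (vscale 2 (eps m i), l)" and "i < m" "1 \<le> l"
      and pos: "0 < ?v ! i - l * int p" and nonzero: "chi m (s_dot m p (vscale 2 (eps m i)) l lam) \<noteq> 0"
      by (auto simp: long_pairs_def)
    then obtain k where k: "i < k" "k < m" "?v ! k = ?v ! i - l * int p"
      using p_core_descent[OF core \<open>0 < p\<close>] by blast
    then have "chi m (s_dot m p (vadd (eps m i) (eps m k)) l lam) \<noteq> 0"
      using chi_s_dot_short_root_eq_neg_long_root[OF len, of i k l p] nonzero by simp
    with k \<open>1 \<le> l\<close> pos have "(vadd (eps m i) (eps m k), l) \<in> short_pairs m p lam"
      by (auto simp: short_pairs_def)
    then show "x \<in> (\<lambda>(\<alpha>, l). (long_root_of m \<alpha>, l)) ` short_pairs m p lam"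
      using long_root_of_short_root[OF k(1,2)] x by force
  qed
qed

theorem lemma2p2:
  fixes p m :: nat and lam :: "int list" and S1 S2 :: "(int list \<times> int) set"
  assumes "prime p" and "p > 2" and "m \<ge> 1"
    and core: "p_core m p lam"
    and S1_def: "S1 = {(\<alpha>, l). \<exists>i j. i < j \<and> j < m \<and> \<alpha> = vadd (eps m i) (eps m j) \<and> l \<ge> 1 \<and>
        pair_coroot (vadd lam (rho m)) \<alpha> - l * int p > 0 \<and>
        (vadd lam (rho m)) ! j - (pair_coroot (vadd lam (rho m)) \<alpha> - l * int p) < 0 \<and>
        chi m (s_dot m p \<alpha> l lam) \<noteq> 0}"
    and S2_def: "S2 = {(\<alpha>, l). \<exists>i. i < m \<and> \<alpha> = vscale 2 (eps m i) \<and> l \<ge> 1 \<and>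
        pair_coroot (vadd lam (rho m)) \<alpha> - l * int p > 0 \<and>
        chi m (s_dot m p \<alpha> l lam) \<noteq> 0}"
  shows "(\<exists>\<phi> :: int list \<times> int \<Rightarrow> int list.
            (\<forall>x\<in>S1. \<phi> x \<in> {vscale 2 (eps m i) | i. i < m}) \<and>
            bij_betw (\<lambda>(\<alpha>, l). (\<phi> (\<alpha>, l), l)) S1 S2 \<and>
            (\<forall>(\<alpha>, l)\<in>S1. chi m (s_dot m p \<alpha> l lam) = - chi m (s_dot m p (\<phi> (\<alpha>, l)) l lam)))
       \<and> (\<forall>i j (l::int). i < j \<and> j < m \<and> j + 1 > nz_len lam \<and> l \<ge> 1 \<and>
            pair_coroot (vadd lam (rho m)) (vadd (eps m i) (eps m j)) - l * int p > 0 \<and>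
            chi m (s_dot m p (vadd (eps m i) (eps m j)) l lam) \<noteq> 0
            \<longrightarrow> (vadd (eps m i) (eps m j), l) \<in> S1)"
proof -
  have "0 < p"
    using \<open>p > 2\<close> by simp
  have dom: "dominant m lam" and len: "length lam = m"
    using core by (simp_all add: p_core_def dominant_def)
  have S1_eq: "S1 = short_pairs m p lam"
    unfolding S1_def short_pairs_def
    using len dominant_shift_pos[OF dom] by (force simp: pair_coroot_short_root)
  have S2_eq: "S2 = long_pairs m p lam"
    unfolding S2_def long_pairs_def using len by (auto simp: pair_coroot_long_root)
  have "\<forall>x\<in>S1. long_root_of m (fst x) \<in> {vscale 2 (eps m i) | i. i < m}"
    unfolding S1_eq short_pairs_def by (auto simp: long_root_of_short_root)
  moreover have "bij_betw (\<lambda>(\<alpha>, l). (long_root_of m \<alpha>, l)) S1 S2"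
    unfolding S1_eq S2_eq by (rule bij_betw_short_pairs_long_pairs[OF core \<open>0 < p\<close>])
  moreover have "\<forall>(\<alpha>, l)\<in>S1. chi m (s_dot m p \<alpha> l lam) = - chi m (s_dot m p (long_root_of m \<alpha>) l lam)"
    unfolding S1_eq using chi_s_dot_short_pair[OF core \<open>0 < p\<close>] by blast
  moreover have "(vadd (eps m i) (eps m j), l) \<in> S1"
    if "i < j" "j < m" "nz_len lam < j + 1" "1 \<le> l"
      "0 < pair_coroot (vadd lam (rho m)) (vadd (eps m i) (eps m j)) - l * int p"
      "chi m (s_dot m p (vadd (eps m i) (eps m j)) l lam) \<noteq> 0" for i j l
    using that short_root_tail_pos[OF dom, of i j l p] unfolding S1_eq short_pairs_def by auto
  ultimately show ?thesis
    by (intro conjI exI[of _ "\<lambda>(\<alpha>, l). long_root_of m \<alpha>"]) (simp_all add: split_beta)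
qed

end
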